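(* For a nonnegative integer $n$, let $r_{\mathrm{OPT}}(n)$ be the number of optimal $\{0,1,-1\}$-representations of $n$. Then $r_{\mathrm{OPT}}$ is $2$-quasimultiplicative; specifically, for all nonnegative integers $a,b,k$ with $b<2^k$, $$r_{\mathrm{OPT}}(2^{k+3}a+b)=r_{\mathrm{OPT}}(a)\,r_{\mathrm{OPT}}(b).$$
   Context: A $\{0,1,-1\}$-representation of $n$ is an expression $n=\sum_{i\ge0}d_i2^i$ with $d_i\in\{0,1,-1\}$ and only finitely many $d_i\neq0$. It is optimal if its number of nonzero digits is minimal among all $\{0,1,-1\}$-representations of $n$. A function $f$ is $2$-quasimultiplicative if for some nonnegative integer $r$, $f(2^{k+r}a+b)=f(a)f(b)$ whenever $0\le b<2^k$. *)

theory Defs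
  imports Main
begin

definition is_rep :: "nat \<Rightarrow> (nat \<Rightarrow> int) \<Rightarrow> bool" where
  "is_rep n d \<longleftrightarrow> (\<forall>i. d i \<in> {0, 1, -1}) \<and> finite {i. d i \<noteq> 0}
     \<and> (\<Sum>i\<in>{i. d i \<noteq> 0}. d i * 2 ^ i) = int n"

definition weight :: "(nat \<Rightarrow> int) \<Rightarrow> nat" where
  "weight d = card {i. d i \<noteq> 0}"

definition optimal_rep :: "nat \<Rightarrow> (nat \<Rightarrow> int) \<Rightarrow> bool" where
  "optimal_rep n d \<longleftrightarrow> is_rep n d \<and> (\<forall>e. is_rep n e \<longrightarrow> weight d \<le> weight e)"

definition r_opt :: "nat \<Rightarrow> nat" where
  "r_opt n = card {d. optimal_rep n d}"

end

theory Submission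
  imports Defs
begin

text \<open>Work over the integers, since dropping the lowest digit \<open>c\<close> of a representation of \<open>n\<close>
  leaves a representation of \<open>(n - c) / 2\<close>, which may be negative. Let \<open>W n\<close> be the least weight
  and \<open>C n\<close> the number of representations attaining it. Peeling off the lowest digit gives
  \<open>W n = min\<^sub>c ([c \<noteq> 0] + W ((n - c) / 2))\<close> and makes \<open>C n\<close> the sum of \<open>C ((n - c) / 2)\<close>
  over the minimising digits \<open>c\<close>. For \<open>|b| \<le> 2\<^sup>k\<close> these recursions for \<open>2\<^sup>k\<^sup>+\<^sup>3 a + b\<close>
  run in parallel with those for \<open>b\<close> until they reach \<open>8a + e\<close> with \<open>e \<in> {-1, 0, 1}\<close>.
  There the three zeros force the lowest digit \<open>e\<close>: since \<open>W (4a \<plusminus> 1) = W a + 1\<close>, the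
  competing digit is strictly worse, so \<open>W (8a + e) = W a + W e\<close> and \<open>C (8a + e) = C a\<close>.\<close>

function min_weight :: "int \<Rightarrow> nat" where
  "min_weight n =
    (if n = 0 then 0 else if n = 1 \<or> n = -1 then 1
     else if even n then min_weight (n div 2)
     else Suc (min (min_weight (n div 2)) (min_weight (n div 2 + 1))))"
  by auto
termination
  by (relation "measure (\<lambda>n. nat \<bar>n\<bar>)") (auto, presburger+)

declare min_weight.simps [simp del]

lemma min_weight_0 [simp]: "min_weight 0 = 0"
  and min_weight_1 [simp]: "min_weight 1 = 1"
  and min_weight_minus_1 [simp]: "min_weight (-1) = 1"
  by (simp_all add: min_weight.simps)

lemma min_weight_double [simp]: "min_weight (2 * m) = min_weight m"
  by (cases "m = 0") (simp_all add: min_weight.simps [of "2 * m"])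

lemma min_weight_odd:
  assumes "e \<in> {1, -1}"
  shows "min_weight (2 * m + e) = Suc (min (min_weight m) (min_weight (m + e)))"
proof (cases "2 * m + e = 1 \<or> 2 * m + e = -1")
  case True
  with assms have "(m, e) \<in> {(0, 1), (1, -1), (0, -1), (-1, 1)}" by auto
  then show ?thesis by auto
next
  case False
  have "odd (2 * m + e)" using assms by auto
  then have "2 * m + e \<noteq> 0" by presburger
  moreover have "(2 * m + e) div 2 = (if e = 1 then m else m - 1)" using assms by auto
  ultimately show ?thesis
    using False assms \<open>odd (2 * m + e)\<close> by (subst min_weight.simps) (auto simp: min.commute)
qed

lemma min_weight_adjacent:
  assumes "e \<in> {1, -1}"
  shows "min_weight (m + e) \<le> Suc (min_weight m)"
  using assms
proof (induction "nat \<bar>m\<bar>" arbitrary: m rule: less_induct)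
  case less
  show ?case
  proof (cases "even m")
    case True
    then obtain q where "m = 2 * q" by blast
    then show ?thesis using min_weight_odd [OF less.prems, of q] by simp
  next
    case False
    define p where "p = (m - e) div 2"
    have m: "m = 2 * p + e" using False less.prems unfolding p_def by auto presburger+
    have "min_weight (p + e) \<le> Suc (min_weight p)"
    proof (cases "p = 0 \<or> p = -e")
      case True
      then show ?thesis using less.prems by auto
    next
      case False
      then have "nat \<bar>p\<bar> < nat \<bar>m\<bar>" using m less.prems by auto
      then show ?thesis using less.hyps less.prems by blast
    qed
    moreover have "min_weight (m + e) = min_weight (p + e)"
      using m min_weight_double [of "p + e"] by (simp add: algebra_simps)
    ultimately show ?thesis using m min_weight_odd [OF less.prems, of p] by simp
  qed
qed

lemma min_weight_le_odd:
  assumes "e \<in> {1, -1}"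
  shows "min_weight m \<le> min_weight (2 * m + e)"
proof -
  have "min_weight ((m + e) + (-e)) \<le> Suc (min_weight (m + e))"
    using assms by (intro min_weight_adjacent) auto
  then show ?thesis using min_weight_odd [OF assms, of m] by simp
qed

lemma min_weight_le_digit:
  assumes "c \<in> {0, 1, -1}" and "2 dvd (n - c)"
  shows "min_weight n \<le> of_bool (c \<noteq> 0) + min_weight ((n - c) div 2)"
proof -
  obtain m where "n = 2 * m + c" using assms(2) by (metis dvd_def diff_eq_eq)
  then show ?thesis using assms(1) min_weight_odd [of c m] by auto
qed

text \<open>\<open>opt_digit n c\<close>: \<open>c\<close> is the lowest digit of some optimal representation of \<open>n\<close>
  (this is \<open>case_nat_in_opt_reps_iff\<close>).\<close>
definition opt_digit :: "int \<Rightarrow> int \<Rightarrow> bool" where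
  "opt_digit n c \<longleftrightarrow> c \<in> {0, 1, -1} \<and> 2 dvd (n - c)
     \<and> min_weight n = of_bool (c \<noteq> 0) + min_weight ((n - c) div 2)"

lemma opt_digit_exists: "\<exists>c. opt_digit n c"
proof (cases "even n")
  case True
  then have "opt_digit n 0" by (auto simp: opt_digit_def elim: evenE)
  then show ?thesis ..
next
  case False
  define m where "m = n div 2"
  have n: "n = 2 * m + 1" using False unfolding m_def by presburger
  have "opt_digit n (if min_weight m \<le> min_weight (m + 1) then 1 else -1)"
    using min_weight_odd [of 1 m] by (simp add: opt_digit_def n add.commute)
  then show ?thesis ..
qed

lemma opt_digit_quotient_smaller:
  assumes "n \<noteq> 0" and "opt_digit n c"
  shows "nat \<bar>(n - c) div 2\<bar> < nat \<bar>n\<bar>"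
proof (cases "\<bar>n\<bar> = 1 \<and> c = -n")
  case True
  then have "min_weight ((n - c) div 2) = min_weight n" by auto
  then show ?thesis using True assms(2) by (simp add: opt_digit_def)
next
  case False
  then show ?thesis using assms by (auto simp: opt_digit_def) presburger+
qed

function opt_count :: "int \<Rightarrow> nat" where
  "opt_count n =
    (if n = 0 then 1
     else \<Sum>c\<in>{0, 1, -1}. if opt_digit n c then opt_count ((n - c) div 2) else 0)"
  by auto
termination
  by (relation "measure (\<lambda>n. nat \<bar>n\<bar>)") (auto dest: opt_digit_quotient_smaller)

declare opt_count.simps [simp del]

lemma opt_count_0 [simp]: "opt_count 0 = 1"
  by (simp add: opt_count.simps)

lemma opt_digit_0_iff [simp]: "opt_digit 0 c \<longleftrightarrow> c = 0"
  by (auto simp: opt_digit_def)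

lemma opt_count_rec:
  "opt_count n = (\<Sum>c\<in>{0, 1, -1}. if opt_digit n c then opt_count ((n - c) div 2) else 0)"
  by (cases "n = 0") (simp_all add: opt_count.simps [of n])

lemma opt_count_unique_digit:
  assumes "opt_digit n c" and "\<And>c'. opt_digit n c' \<Longrightarrow> c' = c"
  shows "opt_count n = opt_count ((n - c) div 2)"
proof -
  have "opt_digit n c' \<longleftrightarrow> c' = c" for c'
    using assms by blast
  then have "opt_count n = (\<Sum>c'\<in>{0, 1, -1}. if c' = c then opt_count ((n - c') div 2) else 0)"
    by (simp only: opt_count_rec [of n])
  also have "\<dots> = opt_count ((n - c) div 2)"
    using assms(1) by (simp add: opt_digit_def)
  finally show ?thesis .
qed

lemma opt_count_double [simp]: "opt_count (2 * m) = opt_count m"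
proof -
  have "opt_count (2 * m) = opt_count ((2 * m - 0) div 2)"
    by (rule opt_count_unique_digit) (auto simp: opt_digit_def)
  then show ?thesis by simp
qed

definition digit_value :: "(nat \<Rightarrow> int) \<Rightarrow> int" where
  "digit_value d = (\<Sum>i\<in>{i. d i \<noteq> 0}. d i * 2 ^ i)"

definition signed_rep :: "int \<Rightarrow> (nat \<Rightarrow> int) \<Rightarrow> bool" where
  "signed_rep n d \<longleftrightarrow> (\<forall>i. d i \<in> {0, 1, -1}) \<and> finite {i. d i \<noteq> 0} \<and> digit_value d = n"

lemma is_rep_iff_signed_rep: "is_rep n d \<longleftrightarrow> signed_rep (int n) d"
  by (simp add: is_rep_def signed_rep_def digit_value_def)

lemma case_nat_eta: "case_nat (d 0) (\<lambda>i. d (Suc i)) = d"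
  by (rule ext) (simp split: nat.split)

lemma inj_case_nat: "inj (case_nat c)"
  by (rule injI) (metis nat.case(2) ext)

lemma support_case_nat:
  "{i. case_nat c e i \<noteq> 0} = (if c = 0 then {} else {0}) \<union> Suc ` {i. e i \<noteq> 0}"
proof (rule set_eqI)
  fix i
  show "i \<in> {i. case_nat c e i \<noteq> 0} \<longleftrightarrow> i \<in> (if c = 0 then {} else {0}) \<union> Suc ` {i. e i \<noteq> 0}"
    by (cases i) auto
qed

lemma weight_case_nat:
  assumes "finite {i. e i \<noteq> 0}"
  shows "weight (case_nat c e) = of_bool (c \<noteq> 0) + weight e"
  unfolding weight_def support_case_nat using assms
  by (subst card_Un_disjoint) (auto simp: card_image)

lemma digit_value_case_nat:
  assumes "finite {i. e i \<noteq> 0}"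
  shows "digit_value (case_nat c e) = c + 2 * digit_value e"
proof -
  have "digit_value (case_nat c e)
      = (\<Sum>i\<in>(if c = 0 then {} else {0}). case_nat c e i * 2 ^ i)
        + (\<Sum>i\<in>Suc ` {i. e i \<noteq> 0}. case_nat c e i * 2 ^ i)"
    unfolding digit_value_def support_case_nat using assms by (subst sum.union_disjoint) auto
  also have "\<dots> = c + 2 * digit_value e"
    by (simp add: sum.reindex digit_value_def sum_distrib_left mult.left_commute)
  finally show ?thesis .
qed

lemma signed_rep_case_nat:
  "signed_rep n (case_nat c e) \<longleftrightarrow> c \<in> {0, 1, -1} \<and> 2 dvd (n - c) \<and> signed_rep ((n - c) div 2) e"
proof -
  have "(\<forall>i. case_nat c e i \<in> {0, 1, -1}) \<longleftrightarrow> c \<in> {0, 1, -1} \<and> (\<forall>i. e i \<in> {0, 1, -1})"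
    by (metis nat.case nat.exhaust)
  moreover have "finite {i. case_nat c e i \<noteq> 0} \<longleftrightarrow> finite {i. e i \<noteq> 0}"
    unfolding support_case_nat by (simp add: finite_image_iff)
  ultimately show ?thesis
    unfolding signed_rep_def by (auto simp: digit_value_case_nat) presburger+
qed

lemma signed_rep_quotient:
  assumes "signed_rep n d"
  shows "d 0 \<in> {0, 1, -1}" and "2 dvd (n - d 0)"
    and "signed_rep ((n - d 0) div 2) (\<lambda>i. d (Suc i))"
  using assms signed_rep_case_nat [of n "d 0" "\<lambda>i. d (Suc i)"] by (simp_all add: case_nat_eta)

lemma min_weight_le_weight:
  assumes "signed_rep n d"
  shows "min_weight n \<le> weight d"
proof -
  txt \<open>Induct on a bound for the support: \<open>|n|\<close> need not drop (\<open>1 = -1 + 2\<close>).\<close>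
  obtain M where "{i. d i \<noteq> 0} \<subseteq> {..<M}"
    using assms unfolding signed_rep_def finite_nat_set_iff_bounded by blast
  then show ?thesis
    using assms
  proof (induction M arbitrary: n d)
    case 0
    then show ?case by (simp add: signed_rep_def digit_value_def)
  next
    case (Suc M)
    let ?m = "(n - d 0) div 2" and ?e = "\<lambda>i. d (Suc i)"
    have "{i. ?e i \<noteq> 0} \<subseteq> {..<M}" using Suc.prems(1) by auto
    then have "min_weight ?m \<le> weight ?e"
      using signed_rep_quotient(3) [OF Suc.prems(2)] by (rule Suc.IH)
    moreover have "weight d = of_bool (d 0 \<noteq> 0) + weight ?e"
      using weight_case_nat [of ?e "d 0"] signed_rep_quotient(3) [OF Suc.prems(2)]
      by (simp add: case_nat_eta signed_rep_def)
    moreover have "min_weight n \<le> of_bool (d 0 \<noteq> 0) + min_weight ?m"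
      using signed_rep_quotient(1,2) [OF Suc.prems(2)] by (rule min_weight_le_digit)
    ultimately show ?case by linarith
  qed
qed

lemma min_weight_attained: "\<exists>d. signed_rep n d \<and> weight d = min_weight n"
proof (induction "nat \<bar>n\<bar>" arbitrary: n rule: less_induct)
  case less
  show ?case
  proof (cases "n = 0")
    case True
    then show ?thesis by (auto simp: signed_rep_def digit_value_def weight_def)
  next
    case False
    obtain c where c: "opt_digit n c" using opt_digit_exists ..
    obtain e where e: "signed_rep ((n - c) div 2) e" "weight e = min_weight ((n - c) div 2)"
      using less.hyps opt_digit_quotient_smaller [OF False c] by blast
    have "signed_rep n (case_nat c e)"
      using c e(1) by (simp add: signed_rep_case_nat opt_digit_def)
    moreover have "weight (case_nat c e) = min_weight n"
      using c e weight_case_nat by (simp add: opt_digit_def signed_rep_def)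
    ultimately show ?thesis by blast
  qed
qed

definition opt_reps :: "int \<Rightarrow> (nat \<Rightarrow> int) set" where
  "opt_reps n = {d. signed_rep n d \<and> weight d = min_weight n}"

lemma optimal_rep_iff_opt_reps: "optimal_rep n d \<longleftrightarrow> d \<in> opt_reps (int n)"
proof -
  obtain e where e: "signed_rep (int n) e" "weight e = min_weight (int n)"
    using min_weight_attained by blast
  have "weight d = min_weight (int n)"
    if "signed_rep (int n) d" "\<forall>e. signed_rep (int n) e \<longrightarrow> weight d \<le> weight e"
    using that e min_weight_le_weight [OF that(1)] by (metis order_antisym)
  moreover have "weight d \<le> weight e'"
    if "weight d = min_weight (int n)" "signed_rep (int n) e'" for e'
    using that min_weight_le_weight by simp
  ultimately show ?thesis
    unfolding optimal_rep_def opt_reps_def is_rep_iff_signed_rep by blast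
qed

lemma opt_reps_0: "opt_reps 0 = {\<lambda>_. 0}"
proof (intro equalityI subsetI)
  fix d assume "d \<in> opt_reps 0"
  then have "finite {i. d i \<noteq> 0}" "card {i. d i \<noteq> 0} = 0"
    by (simp_all add: opt_reps_def signed_rep_def weight_def)
  then have "d = (\<lambda>_. 0)" by (simp add: fun_eq_iff)
  then show "d \<in> {\<lambda>_. 0}" by simp
next
  fix d :: "nat \<Rightarrow> int" assume "d \<in> {\<lambda>_. 0}"
  then show "d \<in> opt_reps 0" by (simp add: opt_reps_def signed_rep_def digit_value_def weight_def)
qed

lemma case_nat_in_opt_reps_iff:
  "case_nat c e \<in> opt_reps n \<longleftrightarrow> opt_digit n c \<and> e \<in> opt_reps ((n - c) div 2)"
proof
  assume "case_nat c e \<in> opt_reps n"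
  then have rep: "c \<in> {0, 1, -1}" "2 dvd (n - c)" "signed_rep ((n - c) div 2) e"
    and "weight (case_nat c e) = min_weight n"
    by (simp_all add: opt_reps_def signed_rep_case_nat)
  then have weight: "of_bool (c \<noteq> 0) + weight e = min_weight n"
    using weight_case_nat [of e c] by (simp add: signed_rep_def)
  have "min_weight n \<le> of_bool (c \<noteq> 0) + min_weight ((n - c) div 2)"
    using rep(1,2) by (rule min_weight_le_digit)
  moreover have "min_weight ((n - c) div 2) \<le> weight e"
    using rep(3) by (rule min_weight_le_weight)
  ultimately show "opt_digit n c \<and> e \<in> opt_reps ((n - c) div 2)"
    using rep weight by (auto simp: opt_digit_def opt_reps_def)
next
  assume opt: "opt_digit n c \<and> e \<in> opt_reps ((n - c) div 2)"
  then have "signed_rep n (case_nat c e)"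
    by (simp add: opt_digit_def opt_reps_def signed_rep_case_nat)
  moreover have "weight (case_nat c e) = min_weight n"
    using opt weight_case_nat [of e c] by (simp add: opt_digit_def opt_reps_def signed_rep_def)
  ultimately show "case_nat c e \<in> opt_reps n" by (simp add: opt_reps_def)
qed

lemma opt_reps_eq_UN:
  "opt_reps n = (\<Union>c\<in>{0, 1, -1}. if opt_digit n c then case_nat c ` opt_reps ((n - c) div 2) else {})"
    (is "_ = ?U")
proof
  show "opt_reps n \<subseteq> ?U"
  proof
    fix d assume "d \<in> opt_reps n"
    then have "opt_digit n (d 0)" "(\<lambda>i. d (Suc i)) \<in> opt_reps ((n - d 0) div 2)"
      using case_nat_in_opt_reps_iff [of "d 0" "\<lambda>i. d (Suc i)"] by (simp_all add: case_nat_eta)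
    moreover have "d = case_nat (d 0) (\<lambda>i. d (Suc i))" by (simp add: case_nat_eta)
    ultimately show "d \<in> ?U" by (auto simp: opt_digit_def)
  qed
  show "?U \<subseteq> opt_reps n"
    using case_nat_in_opt_reps_iff by (auto split: if_splits)
qed

lemma card_opt_reps: "finite (opt_reps n) \<and> card (opt_reps n) = opt_count n"
proof (induction n rule: opt_count.induct)
  case (1 n)
  show ?case
  proof (cases "n = 0")
    case True
    then show ?thesis by (simp add: opt_reps_0)
  next
    case False
    define F where
      "F c = (if opt_digit n c then case_nat c ` opt_reps ((n - c) div 2) else {})" for c
    have F: "finite (F c) \<and> card (F c) = (if opt_digit n c then opt_count ((n - c) div 2) else 0)"
      if "c \<in> {0, 1, -1}" for c
      using "1" [OF False that] by (simp add: F_def card_image inj_on_subset [OF inj_case_nat])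
    have "F c \<inter> F c' = {}" if "c \<noteq> c'" for c c'
      using that by (auto simp: F_def dest: fun_cong [where x = 0])
    then have "card (\<Union>c\<in>{0, 1, -1}. F c) = (\<Sum>c\<in>{0, 1, -1}. card (F c))"
      using F by (intro card_UN_disjoint) auto
    also have "\<dots> = opt_count n"
      unfolding opt_count_rec [of n] using F by (intro sum.cong) auto
    finally show ?thesis
      using F unfolding opt_reps_eq_UN [of n] F_def [symmetric] by simp
  qed
qed

lemma min_weight_four_mul_add:
  assumes "e \<in> {1, -1}"
  shows "min_weight (4 * a + e) = Suc (min_weight a)"
  using min_weight_odd [OF assms, of "2 * a"] min_weight_le_odd [OF assms, of a] by simp

lemma min_weight_eight_mul_add:
  assumes "e \<in> {1, -1}"
  shows "min_weight (8 * a + e) = Suc (min_weight a)"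
  using min_weight_odd [OF assms, of "4 * a"] min_weight_four_mul_add [OF assms, of a]
    min_weight_double [of "2 * a"] by simp

lemma opt_count_eight_mul_add:
  assumes "e \<in> {1, -1}"
  shows "opt_count (8 * a + e) = opt_count a"
proof -
  have "opt_count (8 * a + e) = opt_count ((8 * a + e - e) div 2)"
  proof (rule opt_count_unique_digit)
    show "opt_digit (8 * a + e) e"
      using assms min_weight_eight_mul_add [OF assms] min_weight_double [of "2 * a"]
      by (auto simp: opt_digit_def)
    fix c assume c: "opt_digit (8 * a + e) c"
    show "c = e"
    proof (rule ccontr)
      assume "c \<noteq> e"
      with c assms have "c = -e" by (auto simp: opt_digit_def)
      moreover have "(8 * a + e + e) div 2 = 4 * a + e" using assms by auto
      ultimately have "min_weight (8 * a + e) = Suc (min_weight (4 * a + e))"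
        using c assms by (auto simp: opt_digit_def add.commute)
      then show False
        using min_weight_eight_mul_add [OF assms] min_weight_four_mul_add [OF assms] by simp
    qed
  qed
  then show ?thesis
    using opt_count_double [of "2 * a"] opt_count_double [of a] by simp
qed

lemma digit_quotient_abs_le:
  fixes b c B :: int
  assumes "\<bar>b\<bar> \<le> 2 * B" and "c \<in> {0, 1, -1}" and "2 dvd (b - c)"
  shows "\<bar>(b - c) div 2\<bar> \<le> B"
  using assms by auto presburger+

lemma min_weight_quasimult:
  assumes "\<bar>b\<bar> \<le> 2 ^ k"
  shows "min_weight (2 ^ (k + 3) * a + b) = min_weight a + min_weight b"
  using assms
proof (induction k arbitrary: b)
  case 0
  then have "b \<in> {0, 1, -1}" by auto
  moreover have "min_weight (8 * a) = min_weight a"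
    using min_weight_double [of "2 * (2 * a)"] min_weight_double [of "2 * a"] by simp
  ultimately show ?case using min_weight_eight_mul_add [of b a] by auto
next
  case (Suc k)
  define P where "P = 2 ^ (k + 3) * a"
  have n: "2 ^ (Suc k + 3) * a + b = 2 * P + b" by (simp add: P_def power_add)
  have shift: "min_weight ((2 * P + b - c) div 2) = min_weight a + min_weight ((b - c) div 2)"
    if "c \<in> {0, 1, -1}" "2 dvd (b - c)" for c
  proof -
    have "(2 * P + b - c) div 2 = P + (b - c) div 2" using that(2) by auto
    then show ?thesis
      using Suc.IH [OF digit_quotient_abs_le [OF _ that]] Suc.prems by (simp add: P_def)
  qed
  obtain c where c: "opt_digit b c" using opt_digit_exists ..
  obtain c' where c': "opt_digit (2 * P + b) c'" using opt_digit_exists ..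
  have "min_weight (2 * P + b) \<le> min_weight a + min_weight b"
    using min_weight_le_digit [of c "2 * P + b"] shift [of c] c by (auto simp: opt_digit_def)
  moreover have "min_weight a + min_weight b \<le> min_weight (2 * P + b)"
    using min_weight_le_digit [of c' b] shift [of c'] c' by (auto simp: opt_digit_def)
  ultimately show ?case unfolding n by simp
qed

lemma opt_count_quasimult:
  assumes "\<bar>b\<bar> \<le> 2 ^ k"
  shows "opt_count (2 ^ (k + 3) * a + b) = opt_count a * opt_count b"
  using assms
proof (induction k arbitrary: b)
  case 0
  then have "b \<in> {0, 1, -1}" by auto
  moreover have "opt_count (8 * a) = opt_count a"
    using opt_count_double [of "2 * (2 * a)"] opt_count_double [of "2 * a"] by simp
  ultimately show ?case using opt_count_eight_mul_add [of b a] opt_count_eight_mul_add [of b 0] by auto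
next
  case (Suc k)
  define P where "P = 2 ^ (k + 3) * a"
  have n: "2 ^ (Suc k + 3) * a + b = 2 * P + b" by (simp add: P_def power_add)
  have "(if opt_digit (2 * P + b) c then opt_count ((2 * P + b - c) div 2) else 0)
      = opt_count a * (if opt_digit b c then opt_count ((b - c) div 2) else 0)"
    if "c \<in> {0, 1, -1}" for c
  proof (cases "2 dvd (b - c)")
    case True
    have bound: "\<bar>(b - c) div 2\<bar> \<le> 2 ^ k"
      using Suc.prems that True by (intro digit_quotient_abs_le) auto
    have q: "(2 * P + b - c) div 2 = P + (b - c) div 2" using True by auto
    have "min_weight (2 * P + b) = min_weight a + min_weight b"
      using min_weight_quasimult [OF Suc.prems, of a] by (simp only: n)
    moreover have "min_weight (P + (b - c) div 2) = min_weight a + min_weight ((b - c) div 2)"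
      using min_weight_quasimult [OF bound] by (simp add: P_def)
    ultimately have "opt_digit (2 * P + b) c \<longleftrightarrow> opt_digit b c"
      using True q by (simp add: opt_digit_def)
    then show ?thesis using Suc.IH [OF bound] q by (simp add: P_def)
  next
    case False
    then show ?thesis by (simp add: opt_digit_def)
  qed
  then have "opt_count (2 * P + b) = opt_count a * opt_count b"
    unfolding opt_count_rec [of "2 * P + b"] opt_count_rec [of b] sum_distrib_left
    by (rule sum.cong [OF refl])
  then show ?case unfolding n .
qed

lemma r_opt_eq_opt_count: "r_opt n = opt_count (int n)"
  using card_opt_reps [of "int n"] by (simp add: r_opt_def optimal_rep_iff_opt_reps)

theorem lemma2:
  fixes a b k :: nat
  assumes "b < 2 ^ k"
  shows "r_opt (2 ^ (k + 3) * a + b) = r_opt a * r_opt b"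
proof -
  have "\<bar>int b\<bar> \<le> 2 ^ k" using assms by simp
  then show ?thesis
    using opt_count_quasimult [of "int b" k "int a"] by (simp add: r_opt_eq_opt_count)
qed

end
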